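(* Let $G$ be a connected distance-hereditary graph. Then $G$ is twin-free if and only if $G$ is prime.
   Context: All graphs are finite and simple. A graph is distance-hereditary if it has no induced subgraph isomorphic to a hole (an induced cycle of length at least $5$), the house (a $5$-cycle plus one chord), the domino (a $6$-cycle $v_1\dots v_6$ plus the chord $v_1v_4$), or the gem ($P_4$ plus a vertex adjacent to all four of its vertices). Two distinct vertices $u,v$ are twins if $N(u)\setminus\{u,v\}=N(v)\setminus\{u,v\}$; a graph is twin-free if it has no pair of twins. A module of $G=(V,E)$ is a set $M\subseteq V$ such that every $v\in V\setminus M$ is adjacent to all or to none of $M$; it is trivial if $|M|=1$ or $M=V$; $G$ is prime if all its modules are trivial. *)

theory Defs
  imports Main
begin

definition simple_graph :: "'a set \<Rightarrow> ('a \<Rightarrow> 'a \<Rightarrow> bool) \<Rightarrow> bool" where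
  "simple_graph V E \<longleftrightarrow> finite V \<and> (\<forall>u\<in>V. \<forall>v\<in>V. E u v \<longleftrightarrow> E v u) \<and> (\<forall>v\<in>V. \<not> E v v)"

definition nbhd :: "'a set \<Rightarrow> ('a \<Rightarrow> 'a \<Rightarrow> bool) \<Rightarrow> 'a \<Rightarrow> 'a set" where
  "nbhd V E v = {w \<in> V. E v w}"

definition connected_graph :: "'a set \<Rightarrow> ('a \<Rightarrow> 'a \<Rightarrow> bool) \<Rightarrow> bool" where
  "connected_graph V E \<longleftrightarrow> V \<noteq> {} \<and>
     (\<forall>u\<in>V. \<forall>v\<in>V. (\<lambda>x y. x \<in> V \<and> y \<in> V \<and> E x y)\<^sup>*\<^sup>* u v)"

definition has_induced :: "'a set \<Rightarrow> ('a \<Rightarrow> 'a \<Rightarrow> bool) \<Rightarrow> nat \<Rightarrow> (nat \<Rightarrow> nat \<Rightarrow> bool) \<Rightarrow> bool" where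
  "has_induced V E n H \<longleftrightarrow> (\<exists>f. inj_on f {..<n} \<and> f ` {..<n} \<subseteq> V \<and>
     (\<forall>i<n. \<forall>j<n. i \<noteq> j \<longrightarrow> (E (f i) (f j) \<longleftrightarrow> H i j)))"

definition cycle_adj :: "nat \<Rightarrow> nat \<Rightarrow> nat \<Rightarrow> bool" where
  "cycle_adj n i j \<longleftrightarrow> j = (i + 1) mod n \<or> i = (j + 1) mod n"

definition house_adj :: "nat \<Rightarrow> nat \<Rightarrow> bool" where
  "house_adj i j \<longleftrightarrow> cycle_adj 5 i j \<or> {i, j} = {0, 2}"

definition domino_adj :: "nat \<Rightarrow> nat \<Rightarrow> bool" where
  "domino_adj i j \<longleftrightarrow> cycle_adj 6 i j \<or> {i, j} = {0, 3}"

definition gem_adj :: "nat \<Rightarrow> nat \<Rightarrow> bool" where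
  "gem_adj i j \<longleftrightarrow> {i, j} \<in> {{0, 1}, {1, 2}, {2, 3}, {0, 4}, {1, 4}, {2, 4}, {3, 4}}"

definition distance_hereditary :: "'a set \<Rightarrow> ('a \<Rightarrow> 'a \<Rightarrow> bool) \<Rightarrow> bool" where
  "distance_hereditary V E \<longleftrightarrow>
     (\<forall>k\<ge>5. \<not> has_induced V E k (cycle_adj k)) \<and>
     \<not> has_induced V E 5 house_adj \<and>
     \<not> has_induced V E 6 domino_adj \<and>
     \<not> has_induced V E 5 gem_adj"

definition twins :: "'a set \<Rightarrow> ('a \<Rightarrow> 'a \<Rightarrow> bool) \<Rightarrow> 'a \<Rightarrow> 'a \<Rightarrow> bool" where
  "twins V E u v \<longleftrightarrow> u \<noteq> v \<and> nbhd V E u - {u, v} = nbhd V E v - {u, v}"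

definition twin_free :: "'a set \<Rightarrow> ('a \<Rightarrow> 'a \<Rightarrow> bool) \<Rightarrow> bool" where
  "twin_free V E \<longleftrightarrow> \<not> (\<exists>u\<in>V. \<exists>v\<in>V. twins V E u v)"

text \<open>Modules are taken to be nonempty (otherwise the empty set would be a nontrivial module).\<close>
definition is_module :: "'a set \<Rightarrow> ('a \<Rightarrow> 'a \<Rightarrow> bool) \<Rightarrow> 'a set \<Rightarrow> bool" where
  "is_module V E M \<longleftrightarrow> M \<noteq> {} \<and> M \<subseteq> V \<and>
     (\<forall>v\<in>V - M. (\<forall>m\<in>M. E v m) \<or> (\<forall>m\<in>M. \<not> E v m))"

definition trivial_module :: "'a set \<Rightarrow> 'a set \<Rightarrow> bool" where
  "trivial_module V M \<longleftrightarrow> card M = 1 \<or> M = V"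

definition prime_graph :: "'a set \<Rightarrow> ('a \<Rightarrow> 'a \<Rightarrow> bool) \<Rightarrow> bool" where
  "prime_graph V E \<longleftrightarrow> (\<forall>M. is_module V E M \<longrightarrow> trivial_module V M)"

end

theory Submission
  imports Defs
begin

text \<open>Twins u, v form the module {u, v}, which is trivial only if V = {u, v}.
  Conversely, let M be a module with 2 \<le> card M and M \<noteq> V. By connectedness some vertex
  outside M is adjacent to all of M, so gem-freeness makes M induce a P4-free graph. By
  Seinsche's theorem such a graph, or its complement, is disconnected; the two sides of this split
  are smaller modules, so by induction every P4-free graph on at least two vertices has twins.
  Twins inside a module are twins of the whole graph.\<close>

lemma symp_on_iff: "symp_on A R \<Longrightarrow> x \<in> A \<Longrightarrow> y \<in> A \<Longrightarrow> R x y \<longleftrightarrow> R y x"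
  by (meson symp_onD)

lemma simple_graph_symp_on: "simple_graph V E \<Longrightarrow> symp_on V E"
  unfolding simple_graph_def symp_on_def by blast

lemma twins_iff: "twins S E u v \<longleftrightarrow> u \<noteq> v \<and> (\<forall>w\<in>S - {u, v}. E u w \<longleftrightarrow> E v w)"
  unfolding twins_def nbhd_def by blast

definition induced_P4 :: "('a \<Rightarrow> 'a \<Rightarrow> bool) \<Rightarrow> 'a \<Rightarrow> 'a \<Rightarrow> 'a \<Rightarrow> 'a \<Rightarrow> bool" where
  "induced_P4 E a b c d \<longleftrightarrow>
     distinct [a, b, c, d] \<and> E a b \<and> E b c \<and> E c d \<and> \<not> E a c \<and> \<not> E b d \<and> \<not> E a d"

definition P4_free :: "'a set \<Rightarrow> ('a \<Rightarrow> 'a \<Rightarrow> bool) \<Rightarrow> bool" where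
  "P4_free S E \<longleftrightarrow> (\<forall>a\<in>S. \<forall>b\<in>S. \<forall>c\<in>S. \<forall>d\<in>S. \<not> induced_P4 E a b c d)"

lemma P4_free_subset: "P4_free S E \<Longrightarrow> T \<subseteq> S \<Longrightarrow> P4_free T E"
  unfolding P4_free_def by blast

lemma P4_free_compl:
  assumes "symp_on S E" "P4_free S E"
  shows "P4_free S (\<lambda>x y. \<not> E x y)"
  unfolding P4_free_def
proof (intro ballI notI)
  fix a b c d assume "a \<in> S" "b \<in> S" "c \<in> S" "d \<in> S" "induced_P4 (\<lambda>x y. \<not> E x y) a b c d"
  \<comment> \<open>the complement of the path a-b-c-d is the path c-a-d-b\<close>
  then have "induced_P4 E c a d b"
    using symp_on_iff[OF assms(1)] unfolding induced_P4_def by auto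
  then show False
    using assms(2) \<open>a \<in> S\<close> \<open>b \<in> S\<close> \<open>c \<in> S\<close> \<open>d \<in> S\<close> unfolding P4_free_def by blast
qed

text \<open>For c = False the graph on S is disconnected, for c = True its complement is.\<close>
definition uniform_split :: "'a set \<Rightarrow> ('a \<Rightarrow> 'a \<Rightarrow> bool) \<Rightarrow> bool \<Rightarrow> bool" where
  "uniform_split S E c \<longleftrightarrow> (\<exists>A B. A \<union> B = S \<and> A \<inter> B = {} \<and> A \<noteq> {} \<and> B \<noteq> {} \<and>
     (\<forall>a\<in>A. \<forall>b\<in>B. E a b = c))"

lemma uniform_split_compl: "uniform_split S (\<lambda>x y. \<not> E x y) c \<longleftrightarrow> uniform_split S E (\<not> c)"
proof -
  have "\<And>P. ((\<not> P) = c) = (P = (\<not> c))" by auto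
  then show ?thesis unfolding uniform_split_def by simp
qed

lemma uniform_split_insert_absorb:
  assumes sym: "symp_on (insert x S) E" and P4: "P4_free (insert x S) E" and "x \<notin> S"
    and AB: "A \<union> B = S" "A \<inter> B = {}" "B \<noteq> {}" and no_edge: "\<forall>a\<in>A. \<forall>b\<in>B. \<not> E a b"
    and ab: "a \<in> A" "b \<in> A" "E x a" "\<not> E x b" "E a b"
  shows "uniform_split (insert x S) E False"
proof -
  have "\<not> E x c" if "c \<in> B" for c
  proof
    assume "E x c"
    with that have "induced_P4 E b a x c"
      using ab AB no_edge \<open>x \<notin> S\<close> symp_on_iff[OF sym] unfolding induced_P4_def by auto
    then show False
      using P4 ab AB \<open>c \<in> B\<close> unfolding P4_free_def by blast
  qed
  then show ?thesis
    unfolding uniform_split_def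
    by (intro exI[of _ "insert x A"] exI[of _ B]) (use AB no_edge \<open>x \<notin> S\<close> in auto)
qed

lemma uniform_split_insert:
  assumes sym: "symp_on (insert x S) E" and P4: "P4_free (insert x S) E" and "x \<notin> S"
    and "uniform_split S E False"
  shows "\<exists>c. uniform_split (insert x S) E c"
proof -
  obtain A B where AB: "A \<union> B = S" "A \<inter> B = {}" "A \<noteq> {}" "B \<noteq> {}"
    and no_edge: "\<forall>a\<in>A. \<forall>b\<in>B. \<not> E a b"
    using \<open>uniform_split S E False\<close> unfolding uniform_split_def by auto
  have no_edge': "\<forall>b\<in>B. \<forall>a\<in>A. \<not> E b a"
    using no_edge AB(1) symp_on_iff[OF sym] by blast
  consider "\<forall>y\<in>S. E x y"
    | "\<exists>a\<in>S. \<exists>b\<in>S. E x a \<and> \<not> E x b \<and> E a b"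
    | "\<exists>y\<in>S. \<not> E x y" "\<forall>a\<in>S. \<forall>b\<in>S. E x a \<and> \<not> E x b \<longrightarrow> \<not> E a b"
    by blast
  then show ?thesis
  proof cases
    case 1
    then have "uniform_split (insert x S) E True"
      unfolding uniform_split_def
      by (intro exI[of _ "{x}"] exI[of _ S]) (use \<open>x \<notin> S\<close> AB in auto)
    then show ?thesis ..
  next
    case 2
    then obtain a b where ab: "a \<in> S" "b \<in> S" "E x a" "\<not> E x b" "E a b" by blast
    have "a \<in> A \<and> b \<in> A \<or> a \<in> B \<and> b \<in> B"
      using ab AB(1) no_edge no_edge' by blast
    then have "uniform_split (insert x S) E False"
    proof
      assume "a \<in> A \<and> b \<in> A"
      then show ?thesis
        using uniform_split_insert_absorb[OF sym P4 \<open>x \<notin> S\<close> AB(1,2,4) no_edge] ab by blast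
    next
      assume "a \<in> B \<and> b \<in> B"
      moreover have "B \<union> A = S" "B \<inter> A = {}" using AB by blast+
      ultimately show ?thesis
        using uniform_split_insert_absorb[OF sym P4 \<open>x \<notin> S\<close> _ _ AB(3) no_edge'] ab by blast
    qed
    then show ?thesis ..
  next
    case 3
    \<comment> \<open>no edge leaves the neighbourhood of x in S\<close>
    have "uniform_split (insert x S) E False"
      unfolding uniform_split_def
    proof (rule exI[of _ "{y\<in>S. \<not> E x y}"], rule exI[of _ "insert x {y\<in>S. E x y}"], intro conjI ballI)
      fix a b assume a: "a \<in> {y\<in>S. \<not> E x y}" and b: "b \<in> insert x {y\<in>S. E x y}"
      then show "E a b = False"
        using 3(2) symp_on_iff[OF sym] by (cases "b = x") auto
    qed (use 3(1) \<open>x \<notin> S\<close> in auto)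
    then show ?thesis ..
  qed
qed

theorem P4_free_uniform_split:
  assumes "finite S" "2 \<le> card S" "symp_on S E" "P4_free S E"
  shows "\<exists>c. uniform_split S E c"
  using assms
proof (induction S arbitrary: E rule: finite_induct)
  case empty
  then show ?case by simp
next
  case (insert x F)
  show ?case
  proof (cases "card F = 1")
    case True
    then obtain y where F: "F = {y}" by (auto simp: card_Suc_eq)
    have "uniform_split (insert x F) E (E x y)"
      unfolding uniform_split_def
      by (intro exI[of _ "{x}"] exI[of _ "{y}"]) (use F insert.hyps in auto)
    then show ?thesis ..
  next
    case False
    then have "2 \<le> card F" using insert by simp
    moreover have "symp_on F E" "P4_free F E"
      using insert.prems symp_on_subset P4_free_subset by blast+
    ultimately obtain c where c: "uniform_split F E c" using insert.IH by blast
    show ?thesis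
    proof (cases c)
      case False
      then show ?thesis
        using uniform_split_insert[OF insert.prems(2,3) insert.hyps(2)] c by simp
    next
      case True
      have "symp_on (insert x F) (\<lambda>x y. \<not> E x y)"
        using insert.prems(2) unfolding symp_on_def by blast
      moreover have "uniform_split F (\<lambda>x y. \<not> E x y) False"
        using c True by (simp add: uniform_split_compl)
      ultimately obtain c' where "uniform_split (insert x F) (\<lambda>x y. \<not> E x y) c'"
        using uniform_split_insert[OF _ P4_free_compl[OF insert.prems(2,3)] insert.hyps(2)] by blast
      then have "uniform_split (insert x F) E (\<not> c')"
        by (simp add: uniform_split_compl)
      then show ?thesis ..
    qed
  qed
qed

lemma is_module_twins:
  assumes "symp_on V E" "u \<in> V" "v \<in> V" "twins V E u v"
  shows "is_module V E {u, v}"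
proof -
  have "E w u \<longleftrightarrow> E w v" if "w \<in> V - {u, v}" for w
    using assms(2-4) that symp_on_iff[OF assms(1)] unfolding twins_iff by blast
  then show ?thesis using assms(2,3) unfolding is_module_def by blast
qed

lemma twins_module_lift:
  assumes sym: "symp_on S E" and M: "is_module S E M" and "u \<in> M" "v \<in> M" "twins M E u v"
  shows "twins S E u v"
  unfolding twins_iff
proof (intro conjI ballI)
  show "u \<noteq> v" using \<open>twins M E u v\<close> unfolding twins_iff by blast
  fix w assume w: "w \<in> S - {u, v}"
  show "E u w \<longleftrightarrow> E v w"
  proof (cases "w \<in> M")
    case True
    then show ?thesis using w \<open>twins M E u v\<close> unfolding twins_iff by blast
  next
    case False
    then have "E w u \<longleftrightarrow> E w v" using M w \<open>u \<in> M\<close> \<open>v \<in> M\<close> unfolding is_module_def by blast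
    then show ?thesis using M w \<open>u \<in> M\<close> \<open>v \<in> M\<close> symp_on_iff[OF sym] unfolding is_module_def by blast
  qed
qed

lemma P4_free_proper_module:
  assumes "finite S" "3 \<le> card S" "symp_on S E" "P4_free S E"
  shows "\<exists>M. is_module S E M \<and> 2 \<le> card M \<and> card M < card S"
proof -
  obtain c where "uniform_split S E c"
    using P4_free_uniform_split assms by fastforce
  then obtain A B where AB: "A \<union> B = S" "A \<inter> B = {}" "A \<noteq> {}" "B \<noteq> {}"
    and c: "\<forall>a\<in>A. \<forall>b\<in>B. E a b = c"
    unfolding uniform_split_def by blast
  have "finite A" "finite B" using AB(1) \<open>finite S\<close> by auto
  then have card: "card A + card B = card S" "0 < card A" "0 < card B"
    using AB card_Un_disjoint[of A B] by auto
  have "\<forall>a\<in>A. \<forall>b\<in>B. E b a = c"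
    using c AB(1) symp_on_iff[OF assms(3)] by blast
  then have "is_module S E A" "is_module S E B"
    using AB c unfolding is_module_def by auto
  moreover have "card A < card S" "card B < card S" "2 \<le> card A \<or> 2 \<le> card B"
    using card \<open>3 \<le> card S\<close> by linarith+
  ultimately show ?thesis by blast
qed

theorem P4_free_has_twins:
  assumes "finite S" "2 \<le> card S" "symp_on S E" "P4_free S E"
  shows "\<exists>u\<in>S. \<exists>v\<in>S. twins S E u v"
  using assms
proof (induction "card S" arbitrary: S rule: less_induct)
  case less
  show ?case
  proof (cases "card S = 2")
    case True
    then obtain u v where "S = {u, v}" "u \<noteq> v" by (meson card_2_iff)
    then show ?thesis unfolding twins_iff by auto
  next
    case False
    then have "3 \<le> card S" using less.prems(2) by linarith
    then obtain M where M: "is_module S E M" "2 \<le> card M" "card M < card S"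
      using P4_free_proper_module less.prems(1,3,4) by blast
    then have "M \<subseteq> S" unfolding is_module_def by blast
    then have "finite M" "symp_on M E" "P4_free M E"
      using finite_subset[OF _ less.prems(1)] symp_on_subset[OF less.prems(3)]
        P4_free_subset[OF less.prems(4)] by auto
    then obtain u v where "u \<in> M" "v \<in> M" "twins M E u v"
      using less.hyps[OF M(3)] M(2) by blast
    then show ?thesis
      using twins_module_lift[OF less.prems(3) M(1)] \<open>M \<subseteq> S\<close> by blast
  qed
qed

lemma has_induced_gem:
  assumes "induced_P4 E a b c d" and "{a, b, c, d, w} \<subseteq> V" "w \<notin> {a, b, c, d}"
    and sym: "symp_on V E" and "E w a" "E w b" "E w c" "E w d"
  shows "has_induced V E 5 gem_adj"
proof -
  define f where "f i = [a, b, c, d, w] ! i" for i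
  have "distinct [a, b, c, d, w]" using assms(1,3) unfolding induced_P4_def by auto
  then have "inj_on f {..<5}" unfolding f_def by (intro inj_on_nth) auto
  moreover have "f ` {..<5} \<subseteq> V"
    using assms(2) by (auto simp: f_def lessThan_def numeral_eq_Suc less_Suc_eq)
  moreover have "\<forall>i<5. \<forall>j<5. i \<noteq> j \<longrightarrow> (E (f i) (f j) \<longleftrightarrow> gem_adj i j)"
    using assms symp_on_iff[OF sym]
    by (simp add: f_def induced_P4_def gem_adj_def doubleton_eq_iff numeral_eq_Suc less_Suc_eq
        all_conj_distrib)
  ultimately show ?thesis unfolding has_induced_def by blast
qed

lemma P4_free_if_dominated:
  assumes "distance_hereditary V E" "symp_on V E" "M \<subseteq> V" "y \<in> V - M" "\<forall>m\<in>M. E y m"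
  shows "P4_free M E"
  unfolding P4_free_def
proof (intro ballI notI)
  fix a b c d assume "a \<in> M" "b \<in> M" "c \<in> M" "d \<in> M" "induced_P4 E a b c d"
  then have "has_induced V E 5 gem_adj"
    using assms(2-5) by (intro has_induced_gem[of E a b c d y]) auto
  then show False using assms(1) unfolding distance_hereditary_def by blast
qed

lemma rtranclp_leaves_set:
  assumes "R\<^sup>*\<^sup>* u v" "u \<in> M" "v \<notin> M"
  shows "\<exists>x y. R x y \<and> x \<in> M \<and> y \<notin> M"
  using assms by (induction rule: rtranclp_induct) auto

lemma module_dominated_from_outside:
  assumes "connected_graph V E" "symp_on V E" "is_module V E M" "M \<noteq> V"
  shows "\<exists>y\<in>V - M. \<forall>m\<in>M. E y m"
proof -
  have M: "M \<noteq> {}" "M \<subseteq> V" "\<forall>v\<in>V - M. (\<forall>m\<in>M. E v m) \<or> (\<forall>m\<in>M. \<not> E v m)"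
    using assms(3) unfolding is_module_def by auto
  then obtain m v where "m \<in> M" "v \<in> V - M" using \<open>M \<noteq> V\<close> by blast
  then have "(\<lambda>x y. x \<in> V \<and> y \<in> V \<and> E x y)\<^sup>*\<^sup>* m v"
    using assms(1) M(2) unfolding connected_graph_def by blast
  then obtain x y where "x \<in> M" "y \<in> V - M" "E x y"
    using rtranclp_leaves_set[of _ m v M] \<open>m \<in> M\<close> \<open>v \<in> V - M\<close> by blast
  then have "E y x" using symp_on_iff[OF assms(2)] M(2) by blast
  then show ?thesis using M(3) \<open>x \<in> M\<close> \<open>y \<in> V - M\<close> by blast
qed

lemma nontrivial_module_has_twins:
  assumes sym: "symp_on V E" and "finite V" "connected_graph V E" "distance_hereditary V E"
    and M: "is_module V E M" "card M \<noteq> 1" "M \<noteq> V"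
  shows "\<exists>u\<in>V. \<exists>v\<in>V. twins V E u v"
proof -
  have "M \<subseteq> V" "M \<noteq> {}" using M(1) unfolding is_module_def by auto
  then have "finite M" "0 < card M"
    using \<open>finite V\<close> by (auto intro: finite_subset simp: card_gt_0_iff)
  then have "2 \<le> card M" using \<open>card M \<noteq> 1\<close> by linarith
  obtain y where "y \<in> V - M" "\<forall>m\<in>M. E y m"
    using module_dominated_from_outside[OF assms(3) sym M(1,3)] by blast
  then have "P4_free M E"
    by (rule P4_free_if_dominated[OF assms(4) sym \<open>M \<subseteq> V\<close>])
  then obtain u v where "u \<in> M" "v \<in> M" "twins M E u v"
    using P4_free_has_twins[OF \<open>finite M\<close> \<open>2 \<le> card M\<close> symp_on_subset[OF sym \<open>M \<subseteq> V\<close>]]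
    by blast
  then show ?thesis
    using twins_module_lift[OF sym M(1)] \<open>M \<subseteq> V\<close> by blast
qed

theorem lemma5:
  fixes V :: "'a set" and E :: "'a \<Rightarrow> 'a \<Rightarrow> bool"
  assumes "simple_graph V E"
    and "connected_graph V E"
    and "distance_hereditary V E"
    and "card V \<noteq> 2"
  shows "twin_free V E \<longleftrightarrow> prime_graph V E"
proof
  have sym: "symp_on V E" using assms(1) by (rule simple_graph_symp_on)
  have "finite V" using assms(1) unfolding simple_graph_def by blast
  assume "twin_free V E"
  then show "prime_graph V E"
    using nontrivial_module_has_twins[OF sym \<open>finite V\<close> assms(2,3)]
    unfolding prime_graph_def trivial_module_def twin_free_def by blast
next
  assume "prime_graph V E"
  show "twin_free V E"
    unfolding twin_free_def
  proof clarify
    fix u v assume "u \<in> V" "v \<in> V" "twins V E u v"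
    then have "is_module V E {u, v}"
      by (rule is_module_twins[OF simple_graph_symp_on[OF assms(1)]])
    then have "card {u, v} = 1 \<or> {u, v} = V"
      using \<open>prime_graph V E\<close> unfolding prime_graph_def trivial_module_def by blast
    moreover have "u \<noteq> v" using \<open>twins V E u v\<close> unfolding twins_def by blast
    ultimately show False using assms(4) by auto
  qed
qed

end
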